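(* For every open interval $I$ of $\mathbb{Z}^{\omega}$ there is an order-isomorphism $f_I: \mathbb{Z}^{\omega}\to I$ such that $f_I[A] = A\cap I$ for every subset $A\subseteq \mathbb{Z}^{\omega}$ that is closed under tail-equivalence.
   Context: $\mathbb{Z}^{\omega}$ is the set of integer sequences with the lexicographic order ($u<v$ iff $u_n<v_n$ at the least $n$ with $u_n\ne v_n$). For a finite nonempty integer sequence $r$ and a sequence $u$, $ru$ is concatenation. $u,v\in\mathbb{Z}^{\omega}$ are tail-equivalent if $u=ru'$ and $v=su'$ for some finite sequences $r,s$ (possibly of different lengths) and some $u'\in\mathbb{Z}^{\omega}$; $A$ is closed under tail-equivalence if it is a union of tail-equivalence classes. An open interval of a linear order is a nonempty convex subset with neither a greatest nor a least element. *)

theory Defs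
  imports Main
begin

text \<open>Elements of Z^omega are represented as functions nat => int.\<close>

definition lex_less :: "(nat \<Rightarrow> int) \<Rightarrow> (nat \<Rightarrow> int) \<Rightarrow> bool" where
  "lex_less u v \<longleftrightarrow> (\<exists>n. u n < v n \<and> (\<forall>m<n. u m = v m))"

text \<open>u = r u', v = s u' for finite r, s: dropping k resp. l initial entries gives the same tail.\<close>
definition tail_equiv :: "(nat \<Rightarrow> int) \<Rightarrow> (nat \<Rightarrow> int) \<Rightarrow> bool" where
  "tail_equiv u v \<longleftrightarrow> (\<exists>k l. \<forall>n. u (k + n) = v (l + n))"

definition tail_closed :: "(nat \<Rightarrow> int) set \<Rightarrow> bool" where
  "tail_closed A \<longleftrightarrow> (\<forall>u v. u \<in> A \<longrightarrow> tail_equiv u v \<longrightarrow> v \<in> A)"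

definition open_interval :: "(nat \<Rightarrow> int) set \<Rightarrow> bool" where
  "open_interval I \<longleftrightarrow> I \<noteq> {}
     \<and> (\<forall>x y z. x \<in> I \<longrightarrow> z \<in> I \<longrightarrow> lex_less x y \<longrightarrow> lex_less y z \<longrightarrow> y \<in> I)
     \<and> (\<forall>x\<in>I. \<exists>y\<in>I. lex_less x y)
     \<and> (\<forall>x\<in>I. \<exists>y\<in>I. lex_less y x)"

definition order_iso_onto :: "((nat \<Rightarrow> int) \<Rightarrow> (nat \<Rightarrow> int)) \<Rightarrow> (nat \<Rightarrow> int) set \<Rightarrow> bool" where
  "order_iso_onto f I \<longleftrightarrow> bij_betw f UNIV I \<and> (\<forall>u v. lex_less u v \<longleftrightarrow> lex_less (f u) (f v))"

end

theory Submission
  imports Defs "HOL-Library.Fun_Lexorder"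
begin

text \<open>Since every set closed under tail equivalence is a union of tail classes, it suffices to
  find an order isomorphism from \<open>\<int>\<^sup>\<omega>\<close> onto \<open>I\<close> that maps each sequence to a tail-equivalent one.

  For a final segment \<open>F \<noteq> \<int>\<^sup>\<omega>\<close> let \<open>c\<close> be the least head of an element of \<open>F\<close>; then \<open>F\<close> consists
  of all sequences with head \<open>> c\<close> together with \<open>c F'\<close>, where \<open>F'\<close> is again a final segment.
  Sequences with nonnegative head are sent to heads \<open>> c\<close>, while the sequences with negative
  head form, after changing finitely many initial entries, a copy of \<open>\<int>\<^sup>\<omega>\<close> that is mapped
  recursively onto \<open>F'\<close>; the recursion terminates because each step raises a negative head.
  An open interval \<open>I\<close> is an initial segment of its upper closure \<open>F\<close>; its preimage under the
  isomorphism onto \<open>F\<close> is an initial segment of \<open>\<int>\<^sup>\<omega>\<close>, which negation turns into a final segment.\<close>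

type_synonym seq = "nat \<Rightarrow> int"

definition seq_cons :: "int \<Rightarrow> seq \<Rightarrow> seq" where
  "seq_cons k u n = (case n of 0 \<Rightarrow> k | Suc m \<Rightarrow> u m)"

definition seq_tl :: "seq \<Rightarrow> seq" where
  "seq_tl u n = u (Suc n)"

lemma seq_cons_0 [simp]: "seq_cons k u 0 = k"
  by (simp add: seq_cons_def)

lemma seq_cons_Suc [simp]: "seq_cons k u (Suc n) = u n"
  by (simp add: seq_cons_def)

lemma seq_tl_apply [simp]: "seq_tl u n = u (Suc n)"
  by (simp add: seq_tl_def)

lemma seq_tl_cons [simp]: "seq_tl (seq_cons k u) = u"
  by (simp add: fun_eq_iff)

lemma seq_tl_const [simp]: "seq_tl (\<lambda>_. k) = (\<lambda>_. k)"
  by (simp add: fun_eq_iff)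

lemma seq_cons_const [simp]: "seq_cons k (\<lambda>_. k) = (\<lambda>_. k)"
  by (simp add: fun_eq_iff seq_cons_def split: nat.split)

lemma seq_cons_head_tl [simp]: "seq_cons (u 0) (seq_tl u) = u"
  by (simp add: fun_eq_iff seq_cons_def split: nat.split)

lemma lex_less_eq_less_fun: "lex_less = less_fun"
  by (simp add: fun_eq_iff lex_less_def less_fun_def)

lemma lex_less_irrefl [simp]: "\<not> lex_less u u"
  by (simp add: lex_less_eq_less_fun less_fun_irrefl)

lemma lex_less_trans: "lex_less u v \<Longrightarrow> lex_less v w \<Longrightarrow> lex_less u w"
  unfolding lex_less_eq_less_fun by (rule less_fun_trans)

lemma lex_less_asym: "lex_less u v \<Longrightarrow> \<not> lex_less v u"
  using lex_less_trans lex_less_irrefl by blast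

lemma lex_less_linear: "lex_less u v \<or> u = v \<or> lex_less v u"
proof (cases "u = v")
  case False
  then have ex: "\<exists>k. u k \<noteq> v k" by auto
  define n where "n = (LEAST k. u k \<noteq> v k)"
  have "u n \<noteq> v n" unfolding n_def using ex by (rule LeastI_ex)
  moreover have "\<forall>m<n. u m = v m" unfolding n_def using not_less_Least by blast
  ultimately show ?thesis
    unfolding lex_less_def by (cases "u n < v n") (auto intro!: exI[of _ n])
qed simp

lemma lex_less_head_tl:
  "lex_less u v \<longleftrightarrow> u 0 < v 0 \<or> u 0 = v 0 \<and> lex_less (seq_tl u) (seq_tl v)"
proof -
  have split_0_Suc: "(\<exists>n. P n) \<longleftrightarrow> P 0 \<or> (\<exists>n. P (Suc n))" for P :: "nat \<Rightarrow> bool"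
    by (metis not0_implies_Suc)
  show ?thesis
    unfolding lex_less_def by (subst split_0_Suc) (auto simp: All_less_Suc2)
qed

lemma lex_less_seq_cons:
  "lex_less (seq_cons a u) (seq_cons b v) \<longleftrightarrow> a < b \<or> a = b \<and> lex_less u v"
  by (subst lex_less_head_tl) simp

lemma lex_less_head_le: "lex_less u v \<Longrightarrow> u 0 \<le> v 0"
  by (subst (asm) lex_less_head_tl) auto

lemma lex_less_uminus [simp]: "lex_less (- u) (- v) \<longleftrightarrow> lex_less v u"
  by (auto simp: lex_less_def fun_Compl_def)

lemma order_iso_onto_if_strict_mono:
  assumes "\<And>u v. lex_less u v \<Longrightarrow> lex_less (f u) (f v)" and "range f = S"
  shows "order_iso_onto f S"
proof -
  have "inj f"
    by (metis assms(1) injI lex_less_irrefl lex_less_linear)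
  moreover have "lex_less u v \<longleftrightarrow> lex_less (f u) (f v)" for u v
    by (metis assms(1) lex_less_asym lex_less_linear lex_less_irrefl)
  ultimately show ?thesis
    using assms(2) by (simp add: order_iso_onto_def bij_betw_def)
qed

lemma tail_equiv_refl: "tail_equiv u u"
  unfolding tail_equiv_def by blast

lemma tail_equiv_sym: "tail_equiv u v \<Longrightarrow> tail_equiv v u"
  unfolding tail_equiv_def by metis

lemma tail_equiv_trans: "tail_equiv u v \<Longrightarrow> tail_equiv v w \<Longrightarrow> tail_equiv u w"
proof -
  assume "tail_equiv u v" "tail_equiv v w"
  then obtain k l k' l'
    where uv: "\<And>n. u (k + n) = v (l + n)" and vw: "\<And>n. v (k' + n) = w (l' + n)"
    unfolding tail_equiv_def by blast
  have "u ((k + k') + n) = w ((l' + l) + n)" for n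
    using uv[of "k' + n"] vw[of "l + n"] by (simp add: ac_simps)
  then show ?thesis
    unfolding tail_equiv_def by blast
qed

lemma tail_equiv_seq_cons: "tail_equiv (seq_cons k u) u"
  unfolding tail_equiv_def by (intro exI[of _ 1] exI[of _ 0]) simp

lemma tail_equiv_seq_tl: "tail_equiv (seq_tl u) u"
  unfolding tail_equiv_def by (intro exI[of _ 0] exI[of _ 1]) simp

lemma seq_uminus_uminus [simp]: "- (- u) = (u :: seq)"
  by (simp add: fun_eq_iff)

lemma tail_equiv_uminus: "tail_equiv u v \<Longrightarrow> tail_equiv (- u) (- v)"
  unfolding tail_equiv_def by simp

subsection \<open>Tail-preserving isomorphisms\<close>

definition tail_iso_onto :: "(seq \<Rightarrow> seq) \<Rightarrow> seq set \<Rightarrow> bool" where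
  "tail_iso_onto f S \<longleftrightarrow>
     (\<forall>u v. lex_less u v \<longrightarrow> lex_less (f u) (f v)) \<and> range f = S \<and> (\<forall>u. tail_equiv (f u) u)"

lemma tail_iso_onto_order_iso_onto: "tail_iso_onto f S \<Longrightarrow> order_iso_onto f S"
  unfolding tail_iso_onto_def by (blast intro: order_iso_onto_if_strict_mono)

lemma tail_iso_onto_image_tail_closed:
  assumes "tail_iso_onto f S" and "tail_closed A"
  shows "f ` A = A \<inter> S"
proof -
  have "u \<in> A \<longleftrightarrow> f u \<in> A" for u
    using assms tail_equiv_sym unfolding tail_iso_onto_def tail_closed_def by blast
  then show ?thesis
    using assms(1) unfolding tail_iso_onto_def by blast
qed

lemma tail_iso_onto_comp:
  assumes "tail_iso_onto f S" and "tail_iso_onto g T"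
  shows "tail_iso_onto (f \<circ> g) (f ` T)"
proof -
  have "range (f \<circ> g) = f ` range g"
    by (rule image_comp[symmetric])
  then have "range (f \<circ> g) = f ` T"
    using assms(2) unfolding tail_iso_onto_def by simp
  moreover have "tail_equiv (f (g u)) u" for u
    using assms tail_equiv_trans unfolding tail_iso_onto_def by blast
  ultimately show ?thesis
    using assms unfolding tail_iso_onto_def by simp
qed

lemma tail_iso_onto_uminus_conj:
  assumes "tail_iso_onto f S"
  shows "tail_iso_onto (\<lambda>u. - f (- u)) (uminus ` S)"
proof -
  have "range (\<lambda>u. - f (- u)) = uminus ` range f"
  proof
    show "range (\<lambda>u. - f (- u)) \<subseteq> uminus ` range f"
      by blast
    show "uminus ` range f \<subseteq> range (\<lambda>u. - f (- u))"
    proof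
      fix v assume "v \<in> uminus ` range f"
      then obtain u where "v = - f u" by blast
      then have "v = - f (- (- u))" by simp
      then show "v \<in> range (\<lambda>u. - f (- u))" by blast
    qed
  qed
  moreover have "tail_equiv (- f (- u)) u" for u
    using assms tail_equiv_uminus[of "f (- u)" "- u"] unfolding tail_iso_onto_def by simp
  moreover have "lex_less (- f (- u)) (- f (- v))" if "lex_less u v" for u v
    using assms that unfolding tail_iso_onto_def by simp
  ultimately show ?thesis
    using assms unfolding tail_iso_onto_def by blast
qed

definition onto_nonneg_head :: "seq \<Rightarrow> seq" where
  "onto_nonneg_head w = (if lex_less w (\<lambda>_. 0) then seq_cons 0 w else w)"

lemma onto_nonneg_head_nonneg: "0 \<le> onto_nonneg_head w 0"
proof (cases "lex_less w (\<lambda>_. 0)")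
  case False
  then have "lex_less (\<lambda>_. 0) w \<or> w = (\<lambda>_. 0)"
    using lex_less_linear by blast
  then show ?thesis
    using False lex_less_head_le[of "\<lambda>_. 0" w] by (auto simp: onto_nonneg_head_def)
qed (simp add: onto_nonneg_head_def)

lemma onto_nonneg_head_strict_mono:
  assumes "lex_less u v"
  shows "lex_less (onto_nonneg_head u) (onto_nonneg_head v)"
proof (cases "lex_less u (\<lambda>_. 0)")
  case u: True
  show ?thesis
  proof (cases "lex_less v (\<lambda>_. 0)")
    case True
    then show ?thesis
      using u assms by (simp add: onto_nonneg_head_def lex_less_seq_cons)
  next
    case False
    then have "lex_less (\<lambda>_. 0) v \<or> v = (\<lambda>_. 0)"
      using lex_less_linear by blast
    moreover have "lex_less (seq_cons 0 u) (\<lambda>_. 0)"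
      using u lex_less_seq_cons[of 0 u 0 "\<lambda>_. 0"] by simp
    ultimately show ?thesis
      using u False by (auto simp: onto_nonneg_head_def intro: lex_less_trans)
  qed
next
  case False
  then have "\<not> lex_less v (\<lambda>_. 0)"
    using assms lex_less_linear lex_less_trans lex_less_asym by blast
  then show ?thesis
    using False assms by (simp add: onto_nonneg_head_def)
qed

lemma range_onto_nonneg_head: "0 \<le> v 0 \<Longrightarrow> v \<in> range onto_nonneg_head"
proof (cases "lex_less v (\<lambda>_. 0)")
  case True
  assume "0 \<le> v 0"
  moreover have "v 0 \<le> 0"
    using lex_less_head_le[OF True] by simp
  ultimately have "v 0 = 0" by simp
  then have "lex_less (seq_tl v) (\<lambda>_. 0)"
    using True lex_less_head_tl[of v "\<lambda>_. 0"] by simp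
  then have "onto_nonneg_head (seq_tl v) = seq_cons (v 0) (seq_tl v)"
    using \<open>v 0 = 0\<close> by (simp add: onto_nonneg_head_def)
  then show ?thesis by (metis rangeI seq_cons_head_tl)
next
  case False
  then have "onto_nonneg_head v = v"
    by (simp add: onto_nonneg_head_def)
  then show ?thesis by (metis rangeI)
qed

lemma tail_equiv_onto_nonneg_head: "tail_equiv (onto_nonneg_head w) w"
  by (simp add: onto_nonneg_head_def tail_equiv_seq_cons tail_equiv_refl)

text \<open>An isomorphism from the sequences with negative head onto all sequences: those with
  head \<open>-1\<close> go onto the sequences with nonnegative head, and every other head is raised by one.\<close>

definition from_neg_head :: "seq \<Rightarrow> seq" where
  "from_neg_head u =
     (if u 0 = -1 then onto_nonneg_head (seq_tl u) else seq_cons (u 0 + 1) (seq_tl u))"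

lemma from_neg_head_raises_head: "u 0 < 0 \<Longrightarrow> u 0 < from_neg_head u 0"
  using onto_nonneg_head_nonneg[of "seq_tl u"] by (auto simp: from_neg_head_def)

lemma from_neg_head_strict_mono:
  assumes "u 0 < 0" and "v 0 < 0" and "lex_less u v"
  shows "lex_less (from_neg_head u) (from_neg_head v)"
proof -
  have "u 0 \<le> v 0"
    using lex_less_head_le assms(3) by blast
  consider (both) "u 0 = -1" "v 0 = -1" | (upper) "u 0 \<noteq> -1" "v 0 = -1"
    | (neither) "u 0 \<noteq> -1" "v 0 \<noteq> -1"
    using \<open>u 0 \<le> v 0\<close> assms(2) by linarith
  then show ?thesis
  proof cases
    case both
    then have "lex_less (seq_tl u) (seq_tl v)"
      using assms(3) lex_less_head_tl[of u v] by simp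
    with both show ?thesis
      by (simp add: from_neg_head_def onto_nonneg_head_strict_mono)
  next
    case upper
    then have "from_neg_head u 0 < from_neg_head v 0"
      using onto_nonneg_head_nonneg[of "seq_tl v"] assms(1) by (simp add: from_neg_head_def)
    then show ?thesis
      by (subst lex_less_head_tl) simp
  next
    case neither
    then show ?thesis
      using assms(3) lex_less_head_tl[of u v] by (auto simp: from_neg_head_def lex_less_seq_cons)
  qed
qed

lemma from_neg_head_surj: "\<exists>u. u 0 < 0 \<and> from_neg_head u = w"
proof (cases "w 0 < 0")
  case True
  then show ?thesis
    by (intro exI[of _ "seq_cons (w 0 - 1) (seq_tl w)"]) (simp add: from_neg_head_def)
next
  case False
  then obtain w' where "onto_nonneg_head w' = w"
    using range_onto_nonneg_head by (metis linorder_not_less rangeE)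
  then show ?thesis
    by (intro exI[of _ "seq_cons (-1) w'"]) (simp add: from_neg_head_def)
qed

lemma tail_equiv_from_neg_head: "tail_equiv (from_neg_head u) u"
proof -
  have "tail_equiv (onto_nonneg_head (seq_tl u)) u"
    using tail_equiv_onto_nonneg_head tail_equiv_seq_tl tail_equiv_trans by blast
  moreover have "tail_equiv (seq_cons (u 0 + 1) (seq_tl u)) u"
    using tail_equiv_seq_cons tail_equiv_seq_tl tail_equiv_trans by blast
  ultimately show ?thesis
    by (simp add: from_neg_head_def)
qed

subsection \<open>Final segments\<close>

definition final_segment :: "seq set \<Rightarrow> bool" where
  "final_segment F \<longleftrightarrow> F \<noteq> {} \<and> (\<forall>x y. x \<in> F \<longrightarrow> lex_less x y \<longrightarrow> y \<in> F)
     \<and> (\<forall>x\<in>F. \<exists>y\<in>F. lex_less y x)"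

text \<open>Meaningful only if the heads of \<open>F\<close> are bounded below, i.e.\ for final segments other
  than \<open>UNIV\<close>.\<close>

definition min_head :: "seq set \<Rightarrow> int" where
  "min_head F = (SOME k. (\<exists>x\<in>F. x 0 = k) \<and> (\<forall>x\<in>F. k \<le> x 0))"

definition bottom_slice :: "seq set \<Rightarrow> seq set" where
  "bottom_slice F = {w. seq_cons (min_head F) w \<in> F}"

lemma final_segment_min_head:
  assumes "final_segment F" and "F \<noteq> UNIV"
  shows "(\<exists>x\<in>F. x 0 = min_head F) \<and> (\<forall>x\<in>F. min_head F \<le> x 0)"
proof -
  obtain z where "z \<notin> F"
    using assms(2) by blast
  then have below: "z 0 \<le> x 0" if "x \<in> F" for x
    using that assms(1) lex_less_linear lex_less_head_le unfolding final_segment_def by metis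
  obtain x0 where "x0 \<in> F"
    using assms(1) unfolding final_segment_def by blast
  then obtain x where x: "x \<in> F" "\<forall>y\<in>F. nat (x 0 - z 0) \<le> nat (y 0 - z 0)"
    using ex_has_least_nat[of "\<lambda>y. y \<in> F" x0 "\<lambda>y. nat (y 0 - z 0)"] by blast
  have "\<forall>y\<in>F. x 0 \<le> y 0"
    using x below by fastforce
  then have "\<exists>k. (\<exists>x\<in>F. x 0 = k) \<and> (\<forall>x\<in>F. k \<le> x 0)"
    using x(1) by blast
  then show ?thesis
    unfolding min_head_def by (rule someI_ex)
qed

lemma final_segment_mem_iff:
  assumes "final_segment F" and "F \<noteq> UNIV"
  shows "v \<in> F \<longleftrightarrow> min_head F < v 0 \<or> v 0 = min_head F \<and> seq_tl v \<in> bottom_slice F"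
proof
  assume "v \<in> F"
  then show "min_head F < v 0 \<or> v 0 = min_head F \<and> seq_tl v \<in> bottom_slice F"
    using final_segment_min_head[OF assms] unfolding bottom_slice_def
    by (metis order_le_less seq_cons_head_tl mem_Collect_eq)
next
  assume v: "min_head F < v 0 \<or> v 0 = min_head F \<and> seq_tl v \<in> bottom_slice F"
  obtain x where "x \<in> F" "x 0 = min_head F"
    using final_segment_min_head[OF assms] by blast
  then have "min_head F < v 0 \<Longrightarrow> lex_less x v"
    by (subst lex_less_head_tl) simp
  then show "v \<in> F"
    using v \<open>x \<in> F\<close> assms(1) unfolding final_segment_def bottom_slice_def
    by (metis seq_cons_head_tl mem_Collect_eq)
qed

lemma final_segment_bottom_slice:
  assumes "final_segment F" and "F \<noteq> UNIV"
  shows "final_segment (bottom_slice F)"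
  unfolding final_segment_def
proof (intro conjI allI impI ballI)
  obtain x where "x \<in> F" "x 0 = min_head F"
    using final_segment_min_head[OF assms] by blast
  then have "seq_tl x \<in> bottom_slice F"
    using final_segment_mem_iff[OF assms, of x] by simp
  then show "bottom_slice F \<noteq> {}"
    by blast
next
  fix x y
  assume "x \<in> bottom_slice F" "lex_less x y"
  then show "y \<in> bottom_slice F"
    using assms(1) unfolding bottom_slice_def final_segment_def by (auto simp: lex_less_seq_cons)
next
  fix x
  assume "x \<in> bottom_slice F"
  then obtain y where y: "y \<in> F" "lex_less y (seq_cons (min_head F) x)"
    using assms(1) unfolding bottom_slice_def final_segment_def by blast
  have "y 0 = min_head F"
    using lex_less_head_le[OF y(2)] final_segment_min_head[OF assms] y(1)
    by (metis order_antisym seq_cons_0)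
  then have "seq_tl y \<in> bottom_slice F" and "lex_less (seq_tl y) x"
    using y final_segment_mem_iff[OF assms, of y] lex_less_head_tl[of y "seq_cons (min_head F) x"]
    by simp_all
  then show "\<exists>y\<in>bottom_slice F. lex_less y x"
    by blast
qed

function final_segment_iso :: "seq set \<Rightarrow> seq \<Rightarrow> seq" where
  "final_segment_iso F u =
     (if F = UNIV then u
      else if 0 \<le> u 0 then seq_cons (min_head F + 1 + u 0) (seq_tl u)
      else seq_cons (min_head F) (final_segment_iso (bottom_slice F) (from_neg_head u)))"
  by auto
termination
  by (relation "measure (\<lambda>(F, u). nat (- u 0))")
    (auto dest: from_neg_head_raises_head[OF not_le_imp_less])

declare final_segment_iso.simps [simp del]

lemma final_segment_iso_mem: "final_segment F \<Longrightarrow> final_segment_iso F u \<in> F"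
proof (induction F u rule: final_segment_iso.induct)
  case (1 F u)
  show ?case
  proof (cases "F = UNIV")
    case False
    note mem_iff = final_segment_mem_iff[OF "1.prems" False]
    show ?thesis
    proof (cases "0 \<le> u 0")
      case True
      then show ?thesis
        using False mem_iff by (simp add: final_segment_iso.simps)
    next
      case neg: False
      have "final_segment_iso (bottom_slice F) (from_neg_head u) \<in> bottom_slice F"
        using "1.IH" False neg final_segment_bottom_slice[OF "1.prems" False] by blast
      then show ?thesis
        using False neg mem_iff by (simp add: final_segment_iso.simps)
    qed
  qed simp
qed

lemma tail_equiv_final_segment_iso: "tail_equiv (final_segment_iso F u) u"
proof (induction F u rule: final_segment_iso.induct)
  case (1 F u)
  have "tail_equiv (seq_cons (min_head F + 1 + u 0) (seq_tl u)) u"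
    using tail_equiv_seq_cons tail_equiv_seq_tl tail_equiv_trans by blast
  moreover have
    "tail_equiv (seq_cons (min_head F) (final_segment_iso (bottom_slice F) (from_neg_head u))) u"
    if "F \<noteq> UNIV" and "\<not> 0 \<le> u 0"
    using "1.IH"[OF that] tail_equiv_seq_cons tail_equiv_from_neg_head tail_equiv_trans by blast
  ultimately show ?case
    by (simp add: final_segment_iso.simps tail_equiv_refl)
qed

lemma final_segment_iso_strict_mono:
  "final_segment F \<Longrightarrow> lex_less u v \<Longrightarrow> lex_less (final_segment_iso F u) (final_segment_iso F v)"
proof (induction F u arbitrary: v rule: final_segment_iso.induct)
  case (1 F u)
  show ?case
  proof (cases "F = UNIV")
    case False
    consider (nonneg) "0 \<le> u 0" | (mixed) "u 0 < 0" "0 \<le> v 0" | (neg) "u 0 < 0" "v 0 < 0"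
      by linarith
    then show ?thesis
    proof cases
      case nonneg
      then show ?thesis
        using False "1.prems"(2) lex_less_head_le[OF "1.prems"(2)] lex_less_head_tl[of u v]
        by (auto simp: final_segment_iso.simps lex_less_seq_cons)
    next
      case mixed
      then show ?thesis
        using False by (simp add: final_segment_iso.simps lex_less_seq_cons)
    next
      case neg
      then have "lex_less (final_segment_iso (bottom_slice F) (from_neg_head u))
          (final_segment_iso (bottom_slice F) (from_neg_head v))"
        using "1.IH" False final_segment_bottom_slice[OF "1.prems"(1) False]
          from_neg_head_strict_mono[OF _ _ "1.prems"(2)] by simp
      then show ?thesis
        using False neg by (simp add: final_segment_iso.simps lex_less_seq_cons)
    qed
  qed (simp add: final_segment_iso.simps "1.prems")
qed

lemma range_final_segment_iso_above_min_head:
  assumes "F \<noteq> UNIV" and "min_head F < v 0"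
  shows "v \<in> range (final_segment_iso F)"
proof -
  have "final_segment_iso F (seq_cons (v 0 - min_head F - 1) (seq_tl v)) = v"
    using assms by (simp add: final_segment_iso.simps)
  then show ?thesis
    by (metis rangeI)
qed

lemma range_final_segment_iso_at_min_head:
  assumes "F \<noteq> UNIV" and "v 0 = min_head F"
    and "seq_tl v \<in> range (final_segment_iso (bottom_slice F))"
  shows "v \<in> range (final_segment_iso F)"
proof -
  obtain w where w: "final_segment_iso (bottom_slice F) w = seq_tl v"
    using assms(3) by (metis rangeE)
  obtain u where u: "u 0 < 0" "from_neg_head u = w"
    using from_neg_head_surj by blast
  have "final_segment_iso F u = seq_cons (min_head F) (seq_tl v)"
    using assms(1) u w by (subst final_segment_iso.simps) simp
  also have "\<dots> = v"
    using assms(2) by (metis seq_cons_head_tl)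
  finally show ?thesis
    by (metis rangeI)
qed

text \<open>The smaller element \<open>w\<close> bounds the recursion into bottom slices: \<open>v\<close> leaves them
  by position \<open>n\<close>.\<close>

lemma range_final_segment_iso_if_exceeds:
  assumes "final_segment F" "v \<in> F" "w \<in> F" "w n < v n" "\<forall>m<n. w m = v m"
  shows "v \<in> range (final_segment_iso F)"
  using assms
proof (induction n arbitrary: F v w)
  case (0 F v w)
  show ?case
  proof (cases "F = UNIV")
    case False
    then have "min_head F < v 0"
      using final_segment_min_head[OF "0.prems"(1) False] "0.prems"(3,4) by force
    with False show ?thesis
      by (rule range_final_segment_iso_above_min_head)
  qed (simp add: final_segment_iso.simps)
next
  case (Suc n F v w)
  show ?case
  proof (cases "F = UNIV")
    case False
    note mem_iff = final_segment_mem_iff[OF Suc.prems(1) False]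
    show ?thesis
    proof (cases "min_head F < v 0")
      case True
      with False show ?thesis
        by (rule range_final_segment_iso_above_min_head)
    next
      case not_above: False
      then have v0: "v 0 = min_head F" and w0: "w 0 = v 0"
        using mem_iff Suc.prems(2,5) by auto
      have "seq_tl v \<in> bottom_slice F" and "seq_tl w \<in> bottom_slice F"
        using mem_iff Suc.prems(2,3) v0 w0 by auto
      moreover have "seq_tl w n < seq_tl v n" and "\<forall>m<n. seq_tl w m = seq_tl v m"
        using Suc.prems(4,5) by simp_all
      ultimately have "seq_tl v \<in> range (final_segment_iso (bottom_slice F))"
        using Suc.IH[OF final_segment_bottom_slice[OF Suc.prems(1) False]] by blast
      with False v0 show ?thesis
        by (rule range_final_segment_iso_at_min_head)
    qed
  qed (simp add: final_segment_iso.simps)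
qed

lemma final_segment_tail_iso:
  assumes "final_segment F"
  shows "tail_iso_onto (final_segment_iso F) F"
proof -
  have "v \<in> range (final_segment_iso F)" if "v \<in> F" for v
  proof -
    obtain w where "w \<in> F" "lex_less w v"
      using assms \<open>v \<in> F\<close> unfolding final_segment_def by blast
    then show ?thesis
      using range_final_segment_iso_if_exceeds[OF assms \<open>v \<in> F\<close>] unfolding lex_less_def by blast
  qed
  then have "range (final_segment_iso F) = F"
    using final_segment_iso_mem[OF assms] by blast
  then show ?thesis
    unfolding tail_iso_onto_def
    using final_segment_iso_strict_mono[OF assms] tail_equiv_final_segment_iso by blast
qed

subsection \<open>Initial segments and open intervals\<close>

definition initial_segment :: "seq set \<Rightarrow> bool" where
  "initial_segment J \<longleftrightarrow> J \<noteq> {} \<and> (\<forall>x y. y \<in> J \<longrightarrow> lex_less x y \<longrightarrow> x \<in> J)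
     \<and> (\<forall>x\<in>J. \<exists>y\<in>J. lex_less x y)"

lemma final_segment_uminus_image:
  assumes "initial_segment J"
  shows "final_segment (uminus ` J)"
  unfolding final_segment_def
proof (intro conjI allI impI ballI)
  show "uminus ` J \<noteq> {}"
    using assms unfolding initial_segment_def by blast
next
  fix x y
  assume "x \<in> uminus ` J" and xy: "lex_less x y"
  then obtain x' where "x' \<in> J" "x = - x'"
    by blast
  then have "lex_less (- y) x'"
    using xy lex_less_uminus[of x' "- y"] by simp
  then have "- y \<in> J"
    using assms \<open>x' \<in> J\<close> unfolding initial_segment_def by blast
  then show "y \<in> uminus ` J"
    by (metis image_eqI seq_uminus_uminus)
next
  fix x
  assume "x \<in> uminus ` J"
  then obtain x' where "x' \<in> J" "x = - x'"
    by blast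
  then obtain y where "y \<in> J" "lex_less x' y"
    using assms unfolding initial_segment_def by blast
  then show "\<exists>y\<in>uminus ` J. lex_less y x"
    using \<open>x = - x'\<close> by auto
qed

lemma initial_segment_tail_iso:
  assumes "initial_segment J"
  shows "\<exists>\<psi>. tail_iso_onto \<psi> J"
proof -
  have "tail_iso_onto (final_segment_iso (uminus ` J)) (uminus ` J)"
    using assms by (intro final_segment_tail_iso final_segment_uminus_image)
  then have "tail_iso_onto (\<lambda>u. - final_segment_iso (uminus ` J) (- u)) (uminus ` uminus ` J)"
    by (rule tail_iso_onto_uminus_conj)
  then show ?thesis
    by (auto simp: image_image)
qed

definition upper_closure :: "seq set \<Rightarrow> seq set" where
  "upper_closure I = {y. \<exists>x\<in>I. lex_less x y \<or> x = y}"

lemma final_segment_upper_closure: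
  assumes "open_interval I"
  shows "final_segment (upper_closure I)"
  unfolding final_segment_def
proof (intro conjI allI impI ballI)
  show "upper_closure I \<noteq> {}"
    using assms unfolding open_interval_def upper_closure_def by blast
next
  fix x y
  assume "x \<in> upper_closure I" "lex_less x y"
  then show "y \<in> upper_closure I"
    unfolding upper_closure_def using lex_less_trans by blast
next
  fix x
  assume "x \<in> upper_closure I"
  then obtain z where z: "z \<in> I" "lex_less z x \<or> z = x"
    unfolding upper_closure_def by blast
  then obtain y where "y \<in> I" "lex_less y z"
    using assms unfolding open_interval_def by blast
  then show "\<exists>y\<in>upper_closure I. lex_less y x"
    using z lex_less_trans unfolding upper_closure_def by blast
qed

lemma initial_segment_preimage:
  assumes "open_interval I" and "tail_iso_onto \<phi> (upper_closure I)"
  shows "initial_segment (\<phi> -` I)"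
proof -
  have mono_iff: "lex_less u v \<longleftrightarrow> lex_less (\<phi> u) (\<phi> v)" for u v
    using tail_iso_onto_order_iso_onto[OF assms(2)] unfolding order_iso_onto_def by blast
  have range: "range \<phi> = upper_closure I"
    using assms(2) unfolding tail_iso_onto_def by blast
  have "I \<subseteq> range \<phi>"
    unfolding range upper_closure_def by blast
  have convex: "\<And>x y z. x \<in> I \<Longrightarrow> z \<in> I \<Longrightarrow> lex_less x y \<Longrightarrow> lex_less y z \<Longrightarrow> y \<in> I"
    and no_max: "\<And>x. x \<in> I \<Longrightarrow> \<exists>y\<in>I. lex_less x y"
    using assms(1) unfolding open_interval_def by blast+
  show ?thesis
    unfolding initial_segment_def
  proof (intro conjI allI impI ballI)
    have "I \<noteq> {}"
      using assms(1) unfolding open_interval_def by blast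
    then show "\<phi> -` I \<noteq> {}"
      using \<open>I \<subseteq> range \<phi>\<close> by blast
  next
    fix x y
    assume "y \<in> \<phi> -` I" "lex_less x y"
    then have y: "\<phi> y \<in> I" "lex_less (\<phi> x) (\<phi> y)"
      using mono_iff by auto
    have "\<phi> x \<in> upper_closure I"
      using range by blast
    then obtain z where "z \<in> I" "lex_less z (\<phi> x) \<or> z = \<phi> x"
      unfolding upper_closure_def by blast
    then show "x \<in> \<phi> -` I"
      using y convex by blast
  next
    fix x
    assume "x \<in> \<phi> -` I"
    then obtain y where "y \<in> I" "lex_less (\<phi> x) y"
      using no_max by blast
    moreover obtain u where "\<phi> u = y"
      using \<open>y \<in> I\<close> \<open>I \<subseteq> range \<phi>\<close> by (metis rangeE subsetD)
    ultimately have "u \<in> \<phi> -` I" and "lex_less x u"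
      using mono_iff by auto
    then show "\<exists>y\<in>\<phi> -` I. lex_less x y"
      by blast
  qed
qed

theorem mainTheorem9:
  assumes "open_interval I"
  shows "\<exists>f. order_iso_onto f I \<and> (\<forall>A. tail_closed A \<longrightarrow> f ` A = A \<inter> I)"
proof -
  define \<phi> where "\<phi> = final_segment_iso (upper_closure I)"
  have \<phi>: "tail_iso_onto \<phi> (upper_closure I)"
    unfolding \<phi>_def using assms by (intro final_segment_tail_iso final_segment_upper_closure)
  obtain \<psi> where \<psi>: "tail_iso_onto \<psi> (\<phi> -` I)"
    using initial_segment_tail_iso initial_segment_preimage[OF assms \<phi>] by blast
  have "I \<subseteq> range \<phi>"
    using \<phi> unfolding tail_iso_onto_def upper_closure_def by auto
  then have "\<phi> ` (\<phi> -` I) = I"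
    by (simp add: image_vimage_eq Int_absorb2)
  then have f: "tail_iso_onto (\<phi> \<circ> \<psi>) I"
    using tail_iso_onto_comp[OF \<phi> \<psi>] by simp
  show ?thesis
  proof (intro exI conjI allI impI)
    show "order_iso_onto (\<phi> \<circ> \<psi>) I"
      using f by (rule tail_iso_onto_order_iso_onto)
    show "(\<phi> \<circ> \<psi>) ` A = A \<inter> I" if "tail_closed A" for A
      using f that by (rule tail_iso_onto_image_tail_closed)
  qed
qed

end
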